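(* Let $\bar V$ be a finite node set. Let $S_q,S'_q\in\mathbb R^{\bar V}$, $T_0>0$, $\epsilon_p>0$, $0<\eta\le1$, and let $p=\operatorname{softmax}(S_q/T_0)$, $p'=\operatorname{softmax}(S'_q/T_0)$, $a_v=(p_v+\epsilon_p)^\eta$, $a'_v=(p'_v+\epsilon_p)^\eta$. Let $u_q\in\mathbb R^d$, let $W_x$ be a $d\times d_x$ matrix, and let $x_v,x'_v\in\mathbb R^{d_x}$ for $v\in\bar V$. Define $h_v^{(0)}=a_vu_q+W_xx_v$ and $h_v'^{(0)}=a'_vu_q+W_xx'_v$. Then $$\max_{v\in\bar V}\|h^{(0)}_v-h'^{(0)}_v\|_2\le C_{\mathrm{init}}(\Delta_{\mathrm{seed}}+\Delta_X),\qquad C_{\mathrm{init}}=\frac{\eta\epsilon_p^{\eta-1}}{T_0}\|u_q\|_2+\|W_x\|_2,$$ where $\Delta_{\mathrm{seed}}=\|S_q-S'_q\|_\infty$ and $\Delta_X=\max_{v}\|x_v-x'_v\|_2$.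
   Context: $\|W_x\|_2$ is the spectral norm. In the paper the two primed/unprimed quantities come from two consecutive memory graphs aligned on a common node universe $\bar V$ (nodes absent from one graph are padded as isolated nodes), $S_q$ are query-conditioned entry scores, and $h^{(0)}$ are initial node representations of a graph reader. *)

theory Defs
  imports "HOL-Analysis.Analysis"
begin

definition softmax :: "'v set \<Rightarrow> real \<Rightarrow> ('v \<Rightarrow> real) \<Rightarrow> 'v \<Rightarrow> real" where
  "softmax V T S v = exp (S v / T) / (\<Sum>u\<in>V. exp (S u / T))"

definition spec_norm :: "real^'n^'m \<Rightarrow> real" where
  "spec_norm W = onorm (\<lambda>x. W *v x)"

end

theory Submission
  imports Defs
begin

text \<open>Each entry of the softmax is a logistic sigmoid of \<open>S\<^sub>v/T\<^sub>0\<close> minus the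
  log-sum-exp of the other scaled scores. Log-sum-exp is 1-Lipschitz for the sup norm and
  the sigmoid is \<open>1/4\<close>-Lipschitz, so \<open>|p\<^sub>v - p'\<^sub>v| \<le> \<Delta>\<^sub>s\<^sub>e\<^sub>e\<^sub>d/(2T\<^sub>0)\<close>. Since \<open>\<eta> \<le> 1\<close>,
  \<open>t \<mapsto> t powr \<eta>\<close> is \<open>\<eta> \<epsilon>\<^sub>p powr (\<eta> - 1)\<close>-Lipschitz on \<open>[\<epsilon>\<^sub>p, \<infinity>)\<close>, and the feature
  term is controlled by the spectral norm of \<open>W\<^sub>x\<close>; the triangle inequality adds the two.\<close>

definition sigmoid :: "real \<Rightarrow> real" where
  "sigmoid x = 1 / (1 + exp (- x))"

lemma sigmoid_lipschitz: "\<bar>sigmoid a - sigmoid b\<bar> \<le> \<bar>a - b\<bar> / 4"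
proof -
  have "norm (sigmoid a - sigmoid b) \<le> 1 / 4 * norm (a - b)"
  proof (rule field_differentiable_bound[where S = UNIV])
    fix x :: real
    have pos: "1 + exp (- x) > 0"
      by (simp add: add_pos_pos)
    then show "(sigmoid has_field_derivative exp (- x) / (1 + exp (- x))\<^sup>2) (at x within UNIV)"
      unfolding sigmoid_def by (auto intro!: derivative_eq_intros simp: power2_eq_square)
    have "4 * exp (- x) \<le> (1 + exp (- x))\<^sup>2"
      using sum_squares_ge_zero[of "1 - exp (- x)" 0] by (simp add: power2_eq_square algebra_simps)
    then show "norm (exp (- x) / (1 + exp (- x))\<^sup>2) \<le> 1 / 4"
      using pos by (simp add: pos_divide_le_eq)
  qed auto
  then show ?thesis by simp
qed

lemma powr_add_lipschitz:
  fixes p q eps eta :: real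
  assumes "p \<ge> 0" "q \<ge> 0" "eps > 0" "0 < eta" "eta \<le> 1"
  shows "\<bar>(p + eps) powr eta - (q + eps) powr eta\<bar> \<le> eta * eps powr (eta - 1) * \<bar>p - q\<bar>"
proof -
  have "norm ((\<lambda>t. (t + eps) powr eta) p - (\<lambda>t. (t + eps) powr eta) q)
      \<le> eta * eps powr (eta - 1) * norm (p - q)"
  proof (rule field_differentiable_bound[where S = "{0..}"])
    fix t :: real assume "t \<in> {0..}"
    then have "t + eps \<ge> eps" by simp
    then show "((\<lambda>t. (t + eps) powr eta) has_field_derivative eta * (t + eps) powr (eta - 1))
        (at t within {0..})"
      using assms(3) by (auto intro!: derivative_eq_intros)
    have "(t + eps) powr (eta - 1) \<le> eps powr (eta - 1)"
      using \<open>t + eps \<ge> eps\<close> assms by (intro powr_mono2') auto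
    then show "norm (eta * (t + eps) powr (eta - 1)) \<le> eta * eps powr (eta - 1)"
      using assms(4) by (simp add: abs_mult)
  qed (use assms in auto)
  then show ?thesis by simp
qed

lemma softmax_nonneg: "softmax V T S v \<ge> 0"
  unfolding softmax_def by (intro divide_nonneg_nonneg sum_nonneg) auto

lemma softmax_eq_sigmoid:
  assumes "finite V" "v \<in> V" "V - {v} \<noteq> {}"
  shows "softmax V T S v = sigmoid (S v / T - ln (\<Sum>u\<in>V - {v}. exp (S u / T)))"
proof -
  define R where "R = (\<Sum>u\<in>V - {v}. exp (S u / T))"
  have "R > 0" unfolding R_def using assms by (intro sum_pos) auto
  have "(\<Sum>u\<in>V. exp (S u / T)) = exp (S v / T) + R"
    unfolding R_def using assms by (simp add: sum.remove)
  moreover have "exp (- (S v / T - ln R)) = R / exp (S v / T)"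
    using \<open>R > 0\<close> by (simp add: exp_diff)
  moreover have "exp (S v / T) / (exp (S v / T) + R) = 1 / (1 + R / exp (S v / T))"
    using \<open>R > 0\<close> by (simp add: field_simps add_pos_pos)
  ultimately show ?thesis unfolding softmax_def sigmoid_def R_def[symmetric] by simp
qed

lemma ln_sum_exp_le:
  fixes z z' :: "'a \<Rightarrow> real"
  assumes "finite A" "A \<noteq> {}" "\<And>u. u \<in> A \<Longrightarrow> z' u \<le> z u + d"
  shows "ln (\<Sum>u\<in>A. exp (z' u)) \<le> ln (\<Sum>u\<in>A. exp (z u)) + d"
proof -
  have "(\<Sum>u\<in>A. exp (z' u)) \<le> (\<Sum>u\<in>A. exp (z u) * exp d)"
    by (intro sum_mono) (use assms(3) in \<open>simp flip: exp_add\<close>)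
  also have "\<dots> = exp (ln (\<Sum>u\<in>A. exp (z u)) + d)"
    using assms(1,2) by (simp add: exp_add sum_distrib_right sum_pos)
  finally have "(\<Sum>u\<in>A. exp (z' u)) \<le> exp (ln (\<Sum>u\<in>A. exp (z u)) + d)" .
  moreover have "(\<Sum>u\<in>A. exp (z' u)) > 0"
    using assms(1,2) by (simp add: sum_pos)
  ultimately show ?thesis
    by (metis exp_gt_zero ln_exp ln_le_cancel_iff)
qed

lemma softmax_lipschitz:
  assumes "finite V" "v \<in> V" "T > 0" "\<And>u. u \<in> V \<Longrightarrow> \<bar>S u - S' u\<bar> \<le> d"
  shows "\<bar>softmax V T S v - softmax V T S' v\<bar> \<le> d / (2 * T)"
proof (cases "V - {v} = {}")
  case True
  then have "V = {v}" using assms(2) by auto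
  moreover have "d \<ge> 0" using assms(2,4) by force
  ultimately show ?thesis using assms(3) unfolding softmax_def by simp
next
  case False
  define L where "L R = ln (\<Sum>u\<in>V - {v}. exp (R u / T))" for R
  have scaled: "\<bar>S u / T - S' u / T\<bar> \<le> d / T" if "u \<in> V" for u
    using assms(3) assms(4)[OF that] by (simp add: diff_divide_distrib[symmetric] divide_right_mono)
  have "L S' \<le> L S + d / T" "L S \<le> L S' + d / T"
    unfolding L_def using assms(1) False
    by (auto intro!: ln_sum_exp_le dest: scaled)
  moreover have "\<bar>S v / T - S' v / T\<bar> \<le> d / T" using scaled[OF assms(2)] .
  ultimately have "\<bar>(S v / T - L S) - (S' v / T - L S')\<bar> \<le> 2 * (d / T)" by linarith
  then show ?thesis
    using sigmoid_lipschitz[of "S v / T - L S" "S' v / T - L S'"]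
      softmax_eq_sigmoid[OF assms(1,2) False] unfolding L_def by simp
qed

lemma softmax_powr_lipschitz:
  assumes "finite V" "v \<in> V" "T > 0" "eps > 0" "0 < eta" "eta \<le> 1"
    and "\<And>u. u \<in> V \<Longrightarrow> \<bar>S u - S' u\<bar> \<le> d"
  shows "\<bar>(softmax V T S v + eps) powr eta - (softmax V T S' v + eps) powr eta\<bar>
    \<le> eta * eps powr (eta - 1) / T * d"
proof -
  have "d \<ge> 0" using assms(2,7) by force
  have "\<bar>(softmax V T S v + eps) powr eta - (softmax V T S' v + eps) powr eta\<bar>
      \<le> eta * eps powr (eta - 1) * \<bar>softmax V T S v - softmax V T S' v\<bar>"
    using assms(4-6) by (intro powr_add_lipschitz softmax_nonneg)
  also have "\<dots> \<le> eta * eps powr (eta - 1) * (d / (2 * T))"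
    using assms(5) by (intro mult_left_mono softmax_lipschitz[OF assms(1-3,7)]) auto
  also have "\<dots> \<le> eta * eps powr (eta - 1) / T * d"
    using \<open>d \<ge> 0\<close> assms(3,5) by (simp add: field_simps)
  finally show ?thesis .
qed

lemma spec_norm_nonneg: "spec_norm W \<ge> 0"
  unfolding spec_norm_def by (rule onorm_pos_le) simp

lemma norm_mult_vec_le_spec_norm: "norm (W *v x) \<le> spec_norm W * norm x"
  unfolding spec_norm_def by (rule onorm) simp

lemma norm_diff_scaleR_add_mult_vec_le:
  "norm ((a *\<^sub>R u + W *v x) - (a' *\<^sub>R u + W *v x'))
    \<le> \<bar>a - a'\<bar> * norm u + spec_norm W * norm (x - x')"
proof -
  have "(a *\<^sub>R u + W *v x) - (a' *\<^sub>R u + W *v x') = (a - a') *\<^sub>R u + W *v (x - x')"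
    by (simp add: algebra_simps matrix_vector_mult_diff_distrib)
  then show ?thesis
    using norm_triangle_ineq[of "(a - a') *\<^sub>R u" "W *v (x - x')"]
      norm_mult_vec_le_spec_norm[of W "x - x'"] by simp
qed

lemma initial_rep_diff_le:
  assumes "finite V" "v \<in> V" "T > 0" "eps > 0" "0 < eta" "eta \<le> 1"
    and "\<And>u. u \<in> V \<Longrightarrow> \<bar>S u - S' u\<bar> \<le> ds" and "norm (x - x') \<le> dx"
  shows "norm (((softmax V T S v + eps) powr eta *\<^sub>R u + W *v x)
      - ((softmax V T S' v + eps) powr eta *\<^sub>R u + W *v x'))
    \<le> (eta * eps powr (eta - 1) / T * norm u + spec_norm W) * (ds + dx)"
    (is "norm ((?a *\<^sub>R _ + _) - (?a' *\<^sub>R _ + _)) \<le> (?K * _ + _) * _")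
proof -
  have "ds \<ge> 0" using assms(2,7) by force
  have "dx \<ge> 0" using assms(8) norm_ge_zero order_trans by blast
  have "?K * norm u \<ge> 0" using assms(3,5) by simp
  have cross_terms_le: "c * ds + w * dx \<le> (c + w) * (ds + dx)" if "c \<ge> 0" "w \<ge> 0" for c w :: real
    using that \<open>ds \<ge> 0\<close> \<open>dx \<ge> 0\<close> by (simp add: algebra_simps add_increasing)
  have "\<bar>?a - ?a'\<bar> \<le> ?K * ds"
    using assms by (intro softmax_powr_lipschitz)
  have "norm ((?a *\<^sub>R u + W *v x) - (?a' *\<^sub>R u + W *v x'))
      \<le> \<bar>?a - ?a'\<bar> * norm u + spec_norm W * norm (x - x')"
    by (rule norm_diff_scaleR_add_mult_vec_le)
  also have "\<dots> \<le> ?K * ds * norm u + spec_norm W * dx"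
    using \<open>\<bar>?a - ?a'\<bar> \<le> ?K * ds\<close> assms(8) spec_norm_nonneg
    by (intro add_mono mult_right_mono mult_left_mono) auto
  also have "\<dots> = (?K * norm u) * ds + spec_norm W * dx"
    by (simp add: mult_ac)
  also have "\<dots> \<le> (?K * norm u + spec_norm W) * (ds + dx)"
    using \<open>?K * norm u \<ge> 0\<close> spec_norm_nonneg by (rule cross_terms_le)
  finally show ?thesis .
qed

theorem lemma4p9:
  fixes V :: "'v set"
    and S S' :: "'v \<Rightarrow> real"
    and T0 eps eta :: real
    and u :: "real^'d"
    and W :: "real^'x^'d"
    and x x' :: "'v \<Rightarrow> real^'x"
  assumes "finite V" and "V \<noteq> {}"
    and "T0 > 0" and "eps > 0" and "0 < eta" and "eta \<le> 1"
  shows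
    "(let p = softmax V T0 S; p' = softmax V T0 S';
          a = (\<lambda>v. (p v + eps) powr eta); a' = (\<lambda>v. (p' v + eps) powr eta);
          h = (\<lambda>v. a v *\<^sub>R u + W *v x v); h' = (\<lambda>v. a' v *\<^sub>R u + W *v x' v);
          C = eta * eps powr (eta - 1) / T0 * norm u + spec_norm W;
          \<Delta>seed = Max ((\<lambda>v. \<bar>S v - S' v\<bar>) ` V);
          \<Delta>X = Max ((\<lambda>v. norm (x v - x' v)) ` V)
      in Max ((\<lambda>v. norm (h v - h' v)) ` V) \<le> C * (\<Delta>seed + \<Delta>X))"
proof -
  define \<Delta>seed where "\<Delta>seed = Max ((\<lambda>v. \<bar>S v - S' v\<bar>) ` V)"
  define \<Delta>X where "\<Delta>X = Max ((\<lambda>v. norm (x v - x' v)) ` V)"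
  have "\<bar>S v - S' v\<bar> \<le> \<Delta>seed" and "norm (x v - x' v) \<le> \<Delta>X" if "v \<in> V" for v
    unfolding \<Delta>seed_def \<Delta>X_def using assms(1) that by auto
  then have "norm (((softmax V T0 S v + eps) powr eta *\<^sub>R u + W *v x v)
      - ((softmax V T0 S' v + eps) powr eta *\<^sub>R u + W *v x' v))
      \<le> (eta * eps powr (eta - 1) / T0 * norm u + spec_norm W) * (\<Delta>seed + \<Delta>X)" if "v \<in> V" for v
    using assms that by (intro initial_rep_diff_le) auto
  then show ?thesis
    unfolding Let_def \<Delta>seed_def[symmetric] \<Delta>X_def[symmetric]
    using assms(1,2) by (subst Max_le_iff) auto
qed

end
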